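(* Consider the two-class stochastic Leslie model with matrices $\boldsymbol A_\eta=\begin{pmatrix} f_\eta & F_\eta\\ s_\eta & 0\end{pmatrix}$, $\eta\in\mathcal I$, with $f_\eta,F_\eta,s_\eta\in[\alpha,\beta]$ for constants $0<\alpha\le\beta$, in the standing setting. Let $\bar{\boldsymbol A}=\sum_\eta\pi_\eta\boldsymbol A_\eta$ and let $C_{II}=\log\rho(\bar{\boldsymbol A})+\sum_\eta\pi_\eta\log(1+W^M_\eta)$, where $W^M_\eta$ is computed as in the perturbation construction with $\boldsymbol B=\bar{\boldsymbol A}$. Then $\log\lambda_S\le C_{II}$ and $C_{II}\ge\log\rho(\bar{\boldsymbol A})$.
   Context: Standing setting: $\mathcal I$ is a finite or countable set of environmental states; $(\tau_t)$ is a homogeneous Markov chain on $\mathcal I$ with unique stationary distribution $\boldsymbol\pi$ to which its transition probabilities converge geometrically; the model is $\boldsymbol z(t+1)=\boldsymbol A_{\tau_{t+1}}\boldsymbol z(t)$ with $\boldsymbol z(0)\ge0$ nonzero; the SGR $\lambda_S$ is defined by $\log\lambda_S=\lim_t\frac1t\log\|\boldsymbol z(t)\|_1$ almost surely. For a fixed nonnegative matrix $\boldsymbol B$ with the same zero pattern as each $\boldsymbol A_\eta$: $W^{ij}_\eta=(A^{ij}_\eta-B^{ij})/B^{ij}$ if $B^{ij}\neq0$, $W^{ij}_\eta=0$ if $B^{ij}=0$, and $W^M_\eta=\max_{i,j}W^{ij}_\eta$. $\rho$ is spectral radius. *)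

theory Defs
  imports "HOL-Probability.Probability"
begin

definition complexify :: "real^'n^'n \<Rightarrow> complex^'n^'n" where
  "complexify A = (\<chi> i j. complex_of_real (A $ i $ j))"

definition spectral_radius :: "real^'n^'n \<Rightarrow> real" where
  "spectral_radius A = Max (cmod ` {c :: complex. det (mat c - complexify A) = 0})"

definition Wpert :: "real^'n^'n \<Rightarrow> real^'n^'n \<Rightarrow> 'n \<Rightarrow> 'n \<Rightarrow> real" where
  "Wpert A B i j = (if B $ i $ j \<noteq> 0 then (A $ i $ j - B $ i $ j) / B $ i $ j else 0)"

definition WM :: "real^'n^'n \<Rightarrow> real^'n^'n \<Rightarrow> real" where
  "WM A B = Max (range (\<lambda>(i, j). Wpert A B i j))"

definition norm1 :: "real^'n \<Rightarrow> real" where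
  "norm1 x = (\<Sum>i\<in>UNIV. \<bar>x $ i\<bar>)"

definition leslie2 :: "real \<Rightarrow> real \<Rightarrow> real \<Rightarrow> real^2^2" where
  "leslie2 f F s = vector [vector [f, F], vector [s, 0]]"

definition stochastic_matrix :: "'i set \<Rightarrow> ('i \<Rightarrow> 'i \<Rightarrow> real) \<Rightarrow> bool" where
  "stochastic_matrix I P \<longleftrightarrow>
     (\<forall>i\<in>I. \<forall>j\<in>I. P i j \<ge> 0) \<and> (\<forall>i\<in>I. ((\<lambda>j. P i j) has_sum 1) I)"

fun nstep :: "'i set \<Rightarrow> ('i \<Rightarrow> 'i \<Rightarrow> real) \<Rightarrow> nat \<Rightarrow> 'i \<Rightarrow> 'i \<Rightarrow> real" where
  "nstep I P 0 i j = (if i = j then 1 else 0)"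
| "nstep I P (Suc n) i j = (\<Sum>\<^sub>\<infinity>k\<in>I. nstep I P n i k * P k j)"

definition stationary_distribution :: "'i set \<Rightarrow> ('i \<Rightarrow> 'i \<Rightarrow> real) \<Rightarrow> ('i \<Rightarrow> real) \<Rightarrow> bool" where
  "stationary_distribution I P p \<longleftrightarrow>
     (\<forall>j\<in>I. p j \<ge> 0) \<and> (p has_sum 1) I \<and>
     (\<forall>j\<in>I. ((\<lambda>i. p i * P i j) has_sum p j) I)"

definition standing_markov ::
  "'a measure \<Rightarrow> 'i set \<Rightarrow> ('i \<Rightarrow> 'i \<Rightarrow> real) \<Rightarrow> ('i \<Rightarrow> real) \<Rightarrow> (nat \<Rightarrow> 'a \<Rightarrow> 'i) \<Rightarrow> bool" where
  "standing_markov M I P pst tau \<longleftrightarrow>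
     prob_space M \<and> countable I \<and> stochastic_matrix I P \<and>
     stationary_distribution I P pst \<and>
     (\<forall>q. stationary_distribution I P q \<longrightarrow> (\<forall>j\<in>I. q j = pst j)) \<and>
     (\<exists>C r. 0 \<le> r \<and> r < 1 \<and>
        (\<forall>n. \<forall>i\<in>I. \<forall>j\<in>I. \<bar>nstep I P n i j - pst j\<bar> \<le> C * r ^ n)) \<and>
     (\<forall>t. tau t \<in> measurable M (count_space UNIV)) \<and>
     (\<forall>t. \<forall>\<omega>\<in>space M. tau t \<omega> \<in> I) \<and>
     (\<exists>mu0. \<forall>n (is :: nat \<Rightarrow> 'i). (\<forall>k\<le>n. is k \<in> I) \<longrightarrow>
        measure M {\<omega>\<in>space M. \<forall>k\<le>n. tau k \<omega> = is k}
          = mu0 (is 0) * (\<Prod>k<n. P (is k) (is (Suc k))))"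

primrec zproc :: "('i \<Rightarrow> real^'n^'n) \<Rightarrow> (nat \<Rightarrow> 'a \<Rightarrow> 'i) \<Rightarrow> real^'n \<Rightarrow> nat \<Rightarrow> 'a \<Rightarrow> real^'n" where
  "zproc A tau z0 0 \<omega> = z0"
| "zproc A tau z0 (Suc t) \<omega> = A (tau (Suc t) \<omega>) *v zproc A tau z0 t \<omega>"

end

theory Submission
  imports Defs
begin

text \<open>Let a, b, c be the stationary means of f, F, s, so that the mean matrix is leslie2 a b c,
  with Perron root r and positive eigenvector (r, c). Every realised matrix is entrywise at most
  (1 + W) times the mean matrix, W being its maximal relative perturbation, so comparing the orbit
  with multiples of (r, c) gives pathwise
    ln |z(t)| \<le> (\<Sum>k=1..t. ln (1 + W(tau k))) + t ln r + O(1).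
  Divide by t and take expectations: by dominated convergence the left side tends to log lambda_S,
  and the geometric convergence of the chain turns the expected time average of ln (1 + W(tau k))
  into its stationary mean. Finally W \<ge> 0 because the mean matrix has a zero entry.\<close>

lemma finite_measure_has_sum_UN:
  assumes "finite_measure M" "countable S" "\<And>x. x \<in> S \<Longrightarrow> A x \<in> sets M"
    and "disjoint_family_on A S"
  shows "((\<lambda>x. measure M (A x)) has_sum measure M (\<Union>x\<in>S. A x)) S"
proof -
  interpret finite_measure M by fact
  have "(\<integral>\<^sup>+x. ennreal (measure M (A x)) \<partial>count_space S) = ennreal (measure M (\<Union>x\<in>S. A x))"
    using emeasure_UN_countable[OF assms(3,2,4)]
    by (simp add: emeasure_eq_measure nn_integral_count_space_indicator)
  then have "integrable (count_space S) (\<lambda>x. measure M (A x))"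
    and "infsetsum (\<lambda>x. measure M (A x)) S = measure M (\<Union>x\<in>S. A x)"
    by (auto intro!: integrableI_nonneg simp: infsetsum_conv_nn_integral)
  then show ?thesis
    by (metis abs_summable_on_def abs_summable_equivalent abs_summable_summable
        has_sum_infsum infsetsum_infsum)
qed

lemma weighted_infsum_bounds:
  fixes p h :: "'i \<Rightarrow> real"
  assumes p: "(p has_sum 1) I" "\<And>j. j \<in> I \<Longrightarrow> 0 \<le> p j"
    and h: "\<And>j. j \<in> I \<Longrightarrow> lo \<le> h j \<and> h j \<le> hi" and "0 \<le> lo"
  shows "((\<lambda>j. p j * h j) has_sum (\<Sum>\<^sub>\<infinity>j\<in>I. p j * h j)) I"
    and "lo \<le> (\<Sum>\<^sub>\<infinity>j\<in>I. p j * h j)" "(\<Sum>\<^sub>\<infinity>j\<in>I. p j * h j) \<le> hi"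
proof -
  have "(\<lambda>j. p j * hi) summable_on I"
    using has_sum_cmult_left[OF p(1)] summable_on_def by blast
  then have "(\<lambda>j. p j * h j) summable_on I"
  proof (rule summable_on_comparison_test)
    fix j
    assume "j \<in> I"
    then have "0 \<le> p j" "0 \<le> h j" "h j \<le> hi"
      using p(2) h \<open>0 \<le> lo\<close> by (auto intro: order.trans)
    then show "p j * h j \<le> p j * hi" "0 \<le> p j * h j"
      by (simp_all add: mult_left_mono)
  qed
  then show sum: "((\<lambda>j. p j * h j) has_sum (\<Sum>\<^sub>\<infinity>j\<in>I. p j * h j)) I"
    by (rule has_sum_infsum)
  show "lo \<le> (\<Sum>\<^sub>\<infinity>j\<in>I. p j * h j)"
    using has_sum_mono[OF has_sum_cmult_left[OF p(1), of lo] sum] p h by (auto intro: mult_left_mono)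
  show "(\<Sum>\<^sub>\<infinity>j\<in>I. p j * h j) \<le> hi"
    using has_sum_mono[OF sum has_sum_cmult_left[OF p(1), of hi]] p h by (auto intro: mult_left_mono)
qed

lemma borel_measurable_norm1 [measurable]: "norm1 \<in> borel_measurable borel"
  unfolding norm1_def by (intro borel_measurable_continuous_onI continuous_intros)

lemma (in prob_space) limit_le_of_expectation_le:
  fixes X :: "nat \<Rightarrow> 'a \<Rightarrow> real"
  assumes "\<And>t. X t \<in> borel_measurable M"
    and "\<And>t \<omega>. \<omega> \<in> space M \<Longrightarrow> \<bar>X t \<omega>\<bar> \<le> B"
    and "AE \<omega> in M. (\<lambda>t. X t \<omega>) \<longlonglongrightarrow> L"
    and "\<And>t. 1 \<le> t \<Longrightarrow> expectation (X t) \<le> c + K / t"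
  shows "L \<le> c"
proof -
  have "(\<lambda>t. expectation (X t)) \<longlonglongrightarrow> L"
    using integral_dominated_convergence[where w = "\<lambda>_. B" and f = "\<lambda>_. L" and s = X and M = M]
      assms(1-3) by (auto simp: prob_space)
  moreover have "(\<lambda>t. c + K / real t) \<longlonglongrightarrow> c + 0"
    by (intro tendsto_intros)
  ultimately show ?thesis
    using assms(4) by (intro LIMSEQ_le) (auto intro!: exI[of _ 1])
qed

lemma finite_truncation_le:
  fixes p g :: "'i \<Rightarrow> real"
  assumes p: "(p has_sum 1) I" "\<And>j. j \<in> I \<Longrightarrow> 0 \<le> p j"
    and g: "\<And>j. j \<in> I \<Longrightarrow> 0 \<le> g j \<and> g j \<le> \<Gamma>"
    and "0 < e"
  obtains J where "finite J" "J \<subseteq> I" "\<Gamma> + (\<Sum>j\<in>J. (g j - \<Gamma>) * p j) \<le> (\<Sum>\<^sub>\<infinity>j\<in>I. p j * g j) + e"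
proof -
  have summable: "(\<lambda>j. p j * g j) summable_on I"
    and "0 \<le> (\<Sum>\<^sub>\<infinity>j\<in>I. p j * g j)" "(\<Sum>\<^sub>\<infinity>j\<in>I. p j * g j) \<le> \<Gamma>"
    using weighted_infsum_bounds[where h = g and lo = 0 and hi = \<Gamma>, OF p g] summable_on_def by auto
  then have "0 \<le> \<Gamma>"
    by linarith
  have "eventually (\<lambda>J. dist (sum p J) 1 < e / (\<Gamma> + 1)) (finite_subsets_at_top I)"
    using p(1) \<open>0 < e\<close> \<open>0 \<le> \<Gamma>\<close> unfolding has_sum_def tendsto_iff by simp
  then obtain J where J: "finite J" "J \<subseteq> I" "dist (sum p J) 1 < e / (\<Gamma> + 1)"
    unfolding eventually_finite_subsets_at_top by blast
  have "\<Gamma> * (1 - sum p J) \<le> \<Gamma> * (e / (\<Gamma> + 1))"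
    using J(3) \<open>0 \<le> \<Gamma>\<close> by (intro mult_left_mono) (auto simp: dist_real_def)
  also have "\<dots> \<le> e"
    using \<open>0 < e\<close> \<open>0 \<le> \<Gamma>\<close> by (simp add: field_simps)
  finally have "\<Gamma> * (1 - sum p J) \<le> e" .
  moreover have "(\<Sum>j\<in>J. p j * g j) \<le> (\<Sum>\<^sub>\<infinity>j\<in>I. p j * g j)"
  proof -
    have "(\<Sum>\<^sub>\<infinity>j\<in>J. p j * g j) \<le> (\<Sum>\<^sub>\<infinity>j\<in>I. p j * g j)"
      by (rule infsum_mono_neutral) (use J summable p g in auto)
    then show ?thesis
      using J(1) by simp
  qed
  moreover have "\<Gamma> + (\<Sum>j\<in>J. (g j - \<Gamma>) * p j) = \<Gamma> * (1 - sum p J) + (\<Sum>j\<in>J. p j * g j)"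
    by (simp add: algebra_simps sum_subtractf sum_distrib_left)
  ultimately show ?thesis
    using J that by auto
qed

section \<open>Markov chains given by their path probabilities\<close>

locale markov_chain_paths = prob_space M
  for M :: "'a measure" and I :: "'i set" and P :: "'i \<Rightarrow> 'i \<Rightarrow> real"
    and tau :: "nat \<Rightarrow> 'a \<Rightarrow> 'i" and mu0 :: "'i \<Rightarrow> real" +
  assumes countable_states: "countable I"
    and tau_measurable[measurable]: "\<And>t. tau t \<in> measurable M (count_space UNIV)"
    and tau_in_states: "\<And>t \<omega>. \<omega> \<in> space M \<Longrightarrow> tau t \<omega> \<in> I"
    and prob_cylinder: "\<And>n (is :: nat \<Rightarrow> 'i). (\<forall>k\<le>n. is k \<in> I) \<Longrightarrow>
        measure M {\<omega>\<in>space M. \<forall>k\<le>n. tau k \<omega> = is k}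
          = mu0 (is 0) * (\<Prod>k<n. P (is k) (is (Suc k)))"
begin

definition path_event :: "'i list \<Rightarrow> 'a set" where
  "path_event p = {\<omega>\<in>space M. \<forall>k<length p. tau k \<omega> = p ! k}"

definition paths :: "nat \<Rightarrow> 'i \<Rightarrow> 'i \<Rightarrow> 'i list set" where
  "paths n i j = {p. length p = Suc n \<and> set p \<subseteq> I \<and> p ! 0 = i \<and> p ! n = j}"

lemma path_event_sets: "path_event p \<in> sets M"
  unfolding path_event_def by measurable

lemma prob_path_event:
  assumes "p \<noteq> []" "set p \<subseteq> I"
  shows "prob (path_event p) = mu0 (p ! 0) * (\<Prod>k<length p - 1. P (p ! k) (p ! Suc k))"
proof -
  have "path_event p = {\<omega>\<in>space M. \<forall>k\<le>length p - 1. tau k \<omega> = p ! k}"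
    using assms(1) unfolding path_event_def by (cases p) (auto simp: less_Suc_eq_le)
  moreover have "\<forall>k\<le>length p - 1. p ! k \<in> I"
    using assms by (metis diff_less le_less_trans length_greater_0_conv nth_mem subsetD zero_less_one)
  ultimately show ?thesis
    using prob_cylinder[of "length p - 1" "\<lambda>k. p ! k"] by simp
qed

lemma prob_path_event_snoc:
  assumes "p \<noteq> []" "set p \<subseteq> I" "j \<in> I"
  shows "prob (path_event (p @ [j])) = prob (path_event p) * P (last p) j"
proof -
  obtain m where m: "length p = Suc m"
    using assms(1) by (cases p) auto
  have "(\<Prod>k<m. P ((p @ [j]) ! k) ((p @ [j]) ! Suc k)) = (\<Prod>k<m. P (p ! k) (p ! Suc k))"
    by (intro prod.cong) (auto simp: nth_append m)
  then have "(\<Prod>k<length p. P ((p @ [j]) ! k) ((p @ [j]) ! Suc k))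
      = (\<Prod>k<m. P (p ! k) (p ! Suc k)) * P (last p) j"
    using assms(1) by (simp add: m nth_append last_conv_nth)
  then show ?thesis
    using assms m by (simp add: prob_path_event nth_append)
qed

lemma countable_paths: "countable (paths n i j)"
  by (rule countable_subset[of _ "lists I"]) (auto simp: paths_def countable_states)

lemma disjoint_path_events: "disjoint_family_on (\<lambda>p. path_event (p @ q)) (paths n i j)"
  unfolding disjoint_family_on_def path_event_def paths_def
  by (auto simp: list_eq_iff_nth_eq nth_append)

lemma start_end_event_eq_UN:
  "{\<omega>\<in>space M. tau 0 \<omega> = i \<and> tau n \<omega> = l \<and> (\<forall>k<length q. tau (Suc n + k) \<omega> = q ! k)}
     = (\<Union>p\<in>paths n i l. path_event (p @ q))"
proof (intro equalityI subsetI)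
  fix \<omega>
  assume \<omega>: "\<omega> \<in> {\<omega>\<in>space M. tau 0 \<omega> = i \<and> tau n \<omega> = l \<and> (\<forall>k<length q. tau (Suc n + k) \<omega> = q ! k)}"
  let ?p = "map (\<lambda>k. tau k \<omega>) [0..<Suc n]"
  have "?p \<in> paths n i l"
    using \<omega> tau_in_states by (auto simp: paths_def simp del: upt_Suc)
  moreover have "\<omega> \<in> path_event (?p @ q)"
  proof -
    have "tau k \<omega> = q ! (k - Suc n)" if "Suc n \<le> k" "k < Suc n + length q" for k
      using \<omega> that by (auto dest!: spec[of _ "k - Suc n"])
    then show ?thesis
      using \<omega> unfolding path_event_def by (auto simp: nth_append simp del: upt_Suc)
  qed
  ultimately show "\<omega> \<in> (\<Union>p\<in>paths n i l. path_event (p @ q))"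
    by blast
next
  fix \<omega>
  assume "\<omega> \<in> (\<Union>p\<in>paths n i l. path_event (p @ q))"
  then obtain p where p: "p \<in> paths n i l" and "\<omega> \<in> path_event (p @ q)"
    by auto
  then have "\<omega> \<in> space M" and \<omega>: "\<And>k. k < Suc n + length q \<Longrightarrow> tau k \<omega> = (p @ q) ! k"
    by (auto simp: path_event_def paths_def)
  then show "\<omega> \<in> {\<omega>\<in>space M. tau 0 \<omega> = i \<and> tau n \<omega> = l \<and> (\<forall>k<length q. tau (Suc n + k) \<omega> = q ! k)}"
    using p \<omega>[of 0] \<omega>[of n] \<omega>[of "Suc n + _"] by (auto simp: paths_def nth_append)
qed

lemma prob_markov_step:
  assumes "j \<in> I"
  shows "prob {\<omega>\<in>space M. tau 0 \<omega> = i \<and> tau n \<omega> = l \<and> tau (Suc n) \<omega> = j}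
     = prob {\<omega>\<in>space M. tau 0 \<omega> = i \<and> tau n \<omega> = l} * P l j"
proof -
  have "((\<lambda>p. prob (path_event (p @ q))) has_sum
      prob {\<omega>\<in>space M. tau 0 \<omega> = i \<and> tau n \<omega> = l \<and> (\<forall>k<length q. tau (Suc n + k) \<omega> = q ! k)})
      (paths n i l)" for q
    unfolding start_end_event_eq_UN
    by (intro finite_measure_has_sum_UN finite_measure_axioms countable_paths path_event_sets
        disjoint_path_events)
  from this[of "[j]"] this[of "[]"]
  have "((\<lambda>p. prob (path_event (p @ [j]))) has_sum
        prob {\<omega>\<in>space M. tau 0 \<omega> = i \<and> tau n \<omega> = l \<and> tau (Suc n) \<omega> = j}) (paths n i l)"
    and "((\<lambda>p. prob (path_event p) * P l j) has_sum
        prob {\<omega>\<in>space M. tau 0 \<omega> = i \<and> tau n \<omega> = l} * P l j) (paths n i l)"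
    by (auto intro: has_sum_cmult_left)
  moreover have "prob (path_event (p @ [j])) = prob (path_event p) * P l j" if "p \<in> paths n i l" for p
  proof -
    from that have "p \<noteq> []" "set p \<subseteq> I" "last p = l"
      by (auto simp: paths_def last_conv_nth simp flip: length_greater_0_conv)
    then show ?thesis
      using assms prob_path_event_snoc by simp
  qed
  ultimately show ?thesis
    by (metis (no_types, lifting) has_sum_cong has_sum_unique)
qed

lemma prob_initial: "i \<in> I \<Longrightarrow> prob {\<omega>\<in>space M. tau 0 \<omega> = i} = mu0 i"
  using prob_cylinder[of 0 "\<lambda>_. i"] by simp

lemma initial_nonneg: "i \<in> I \<Longrightarrow> 0 \<le> mu0 i"
  by (metis measure_nonneg prob_initial)

lemma prob_partition_states:
  assumes "\<And>j. j \<in> I \<Longrightarrow> E j \<in> sets M" "disjoint_family_on E I"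
  shows "((\<lambda>j. prob (E j)) has_sum prob (\<Union>j\<in>I. E j)) I"
  by (rule finite_measure_has_sum_UN[OF finite_measure_axioms countable_states assms])

lemma initial_has_sum: "(mu0 has_sum 1) I"
proof -
  have "space M = (\<Union>i\<in>I. {\<omega>\<in>space M. tau 0 \<omega> = i})"
    using tau_in_states by auto
  then have "((\<lambda>i. prob {\<omega>\<in>space M. tau 0 \<omega> = i}) has_sum 1) I"
    using prob_partition_states[of "\<lambda>i. {\<omega>\<in>space M. tau 0 \<omega> = i}"]
    by (auto simp: disjoint_family_on_def prob_space)
  then show ?thesis
    by (rule has_sum_cong[THEN iffD1, rotated]) (simp add: prob_initial)
qed

lemma prob_start_end:
  assumes "i \<in> I" "j \<in> I"
  shows "prob {\<omega>\<in>space M. tau 0 \<omega> = i \<and> tau n \<omega> = j} = mu0 i * nstep I P n i j"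
  using assms(2)
proof (induction n arbitrary: j)
  case 0
  have "{\<omega>\<in>space M. tau 0 \<omega> = i \<and> tau 0 \<omega> = j}
      = (if i = j then {\<omega>\<in>space M. tau 0 \<omega> = i} else {})"
    by auto
  then show ?case
    using prob_initial[OF assms(1)] by auto
next
  case (Suc n)
  have "{\<omega>\<in>space M. tau 0 \<omega> = i \<and> tau (Suc n) \<omega> = j}
     = (\<Union>l\<in>I. {\<omega>\<in>space M. tau 0 \<omega> = i \<and> tau n \<omega> = l \<and> tau (Suc n) \<omega> = j})"
    using tau_in_states by auto
  then have "((\<lambda>l. prob {\<omega>\<in>space M. tau 0 \<omega> = i \<and> tau n \<omega> = l \<and> tau (Suc n) \<omega> = j}) has_sum
        prob {\<omega>\<in>space M. tau 0 \<omega> = i \<and> tau (Suc n) \<omega> = j}) I"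
    using prob_partition_states[of "\<lambda>l. {\<omega>\<in>space M. tau 0 \<omega> = i \<and> tau n \<omega> = l \<and> tau (Suc n) \<omega> = j}"]
    by (auto simp: disjoint_family_on_def)
  then have "((\<lambda>l. mu0 i * (nstep I P n i l * P l j)) has_sum
        prob {\<omega>\<in>space M. tau 0 \<omega> = i \<and> tau (Suc n) \<omega> = j}) I"
    by (rule has_sum_cong[THEN iffD1, rotated]) (simp add: prob_markov_step Suc)
  then have "prob {\<omega>\<in>space M. tau 0 \<omega> = i \<and> tau (Suc n) \<omega> = j}
      = (\<Sum>\<^sub>\<infinity>l\<in>I. mu0 i * (nstep I P n i l * P l j))"
    by (rule infsumI[symmetric])
  then show ?case
    by (simp add: infsum_cmult_right')
qed

lemma prob_state_ge:
  assumes "j \<in> I" and "\<And>i. i \<in> I \<Longrightarrow> \<bar>nstep I P n i j - p\<bar> \<le> e"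
  shows "p - e \<le> prob {\<omega>\<in>space M. tau n \<omega> = j}"
proof -
  have "{\<omega>\<in>space M. tau n \<omega> = j} = (\<Union>i\<in>I. {\<omega>\<in>space M. tau 0 \<omega> = i \<and> tau n \<omega> = j})"
    using tau_in_states by auto
  then have "((\<lambda>i. prob {\<omega>\<in>space M. tau 0 \<omega> = i \<and> tau n \<omega> = j})
      has_sum prob {\<omega>\<in>space M. tau n \<omega> = j}) I"
    using prob_partition_states[of "\<lambda>i. {\<omega>\<in>space M. tau 0 \<omega> = i \<and> tau n \<omega> = j}"]
    by (auto simp: disjoint_family_on_def)
  then have "((\<lambda>i. mu0 i * nstep I P n i j) has_sum prob {\<omega>\<in>space M. tau n \<omega> = j}) I"
    by (rule has_sum_cong[THEN iffD1, rotated]) (simp add: prob_start_end assms(1))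
  moreover have "mu0 i * (p - e) \<le> mu0 i * nstep I P n i j" if "i \<in> I" for i
    using assms(2)[OF that] initial_nonneg[OF that] by (intro mult_left_mono) auto
  ultimately show ?thesis
    using has_sum_mono[OF has_sum_cmult_left[OF initial_has_sum]] by fastforce
qed

lemma integrable_state_fun:
  fixes g :: "'i \<Rightarrow> real"
  assumes "\<And>j. j \<in> I \<Longrightarrow> \<bar>g j\<bar> \<le> B"
  shows "integrable M (\<lambda>\<omega>. g (tau k \<omega>))"
  using assms tau_in_states
  by (intro integrable_const_bound[where B = B] measurable_compose[OF tau_measurable]) auto

lemma expectation_state_fun_le:
  assumes J: "finite J" "J \<subseteq> I"
    and g: "\<And>j. j \<in> I \<Longrightarrow> 0 \<le> g j \<and> g j \<le> \<Gamma>"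
    and conv: "\<And>i j. i \<in> I \<Longrightarrow> j \<in> I \<Longrightarrow> \<bar>nstep I P k i j - p j\<bar> \<le> e"
  shows "expectation (\<lambda>\<omega>. g (tau k \<omega>)) \<le> \<Gamma> + (\<Sum>j\<in>J. (g j - \<Gamma>) * p j) + real (card J) * \<Gamma> * e"
proof -
  define E where "E j = {\<omega>\<in>space M. tau k \<omega> = j}" for j
  have E_sets[measurable]: "E j \<in> sets M" for j
    unfolding E_def by measurable
  have integrable_E: "integrable M (\<lambda>\<omega>. (g j - \<Gamma>) * indicator (E j) \<omega>)" for j
    by (intro Bochner_Integration.integrable_mult_right integrable_real_indicator)
       (auto simp: less_top[symmetric])
  have pointwise: "g (tau k \<omega>) \<le> \<Gamma> + (\<Sum>j\<in>J. (g j - \<Gamma>) * indicator (E j) \<omega>)"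
    if "\<omega> \<in> space M" for \<omega>
  proof -
    have "(\<Sum>j\<in>J. (g j - \<Gamma>) * indicator (E j) \<omega>) = (\<Sum>j\<in>J. if j = tau k \<omega> then g j - \<Gamma> else 0)"
      by (rule sum.cong) (auto simp: E_def that indicator_def)
    then show ?thesis
      using J g[OF tau_in_states[OF that]] by (auto simp: sum.delta')
  qed
  have "expectation (\<lambda>\<omega>. g (tau k \<omega>))
      \<le> expectation (\<lambda>\<omega>. \<Gamma> + (\<Sum>j\<in>J. (g j - \<Gamma>) * indicator (E j) \<omega>))"
  proof (rule integral_mono)
    show "integrable M (\<lambda>\<omega>. g (tau k \<omega>))"
      using g by (intro integrable_state_fun[where B = \<Gamma>]) auto
    show "integrable M (\<lambda>\<omega>. \<Gamma> + (\<Sum>j\<in>J. (g j - \<Gamma>) * indicator (E j) \<omega>))"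
      using integrable_E by simp
  qed (rule pointwise)
  also have "\<dots> = \<Gamma> + (\<Sum>j\<in>J. (g j - \<Gamma>) * prob (E j))"
    using integrable_E by (simp add: prob_space)
  also have "\<dots> \<le> \<Gamma> + (\<Sum>j\<in>J. (g j - \<Gamma>) * p j + \<Gamma> * e)"
  proof (intro add_left_mono sum_mono)
    fix j
    assume "j \<in> J"
    with J have j: "j \<in> I" by auto
    have "p j - e \<le> prob (E j)"
      unfolding E_def using j by (rule prob_state_ge) (use conv j in auto)
    then have "(g j - \<Gamma>) * prob (E j) \<le> (g j - \<Gamma>) * (p j - e)"
      using g[OF j] by (intro mult_left_mono_neg) auto
    also have "\<dots> \<le> (g j - \<Gamma>) * p j + \<Gamma> * e"
      using g[OF j] conv[OF j j] by (auto simp: algebra_simps intro!: mult_right_mono)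
    finally show "(g j - \<Gamma>) * prob (E j) \<le> (g j - \<Gamma>) * p j + \<Gamma> * e" .
  qed
  finally show ?thesis
    by (simp add: sum.distrib)
qed

lemma states_nonempty: "I \<noteq> {}"
  using not_empty tau_in_states by blast

lemma expectation_time_sum_le:
  assumes J: "finite J" "J \<subseteq> I"
    and g: "\<And>j. j \<in> I \<Longrightarrow> 0 \<le> g j \<and> g j \<le> \<Gamma>"
    and conv: "\<And>n i j. i \<in> I \<Longrightarrow> j \<in> I \<Longrightarrow> \<bar>nstep I P n i j - p j\<bar> \<le> C * r ^ n"
    and r: "0 \<le> r" "r < 1"
  shows "expectation (\<lambda>\<omega>. \<Sum>k\<in>{1..t}. g (tau k \<omega>))
    \<le> t * (\<Gamma> + (\<Sum>j\<in>J. (g j - \<Gamma>) * p j)) + real (card J) * \<Gamma> * C / (1 - r)"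
proof -
  obtain j0 where j0: "j0 \<in> I"
    using states_nonempty by blast
  have "0 \<le> \<Gamma>" "0 \<le> C"
    using g[OF j0] conv[OF j0 j0, of 0] by auto
  have "(\<Sum>k\<in>{1..t}. r ^ k) \<le> (\<Sum>k<Suc t. r ^ k)"
    by (rule sum_mono2) (use r in auto)
  also have "\<dots> = (1 - r ^ Suc t) / (1 - r)"
    using r by (subst sum_gp_strict) simp
  also have "\<dots> \<le> 1 / (1 - r)"
    using r by (simp add: divide_right_mono)
  finally have geometric: "(\<Sum>k\<in>{1..t}. r ^ k) \<le> 1 / (1 - r)" .
  have "expectation (\<lambda>\<omega>. \<Sum>k\<in>{1..t}. g (tau k \<omega>)) = (\<Sum>k\<in>{1..t}. expectation (\<lambda>\<omega>. g (tau k \<omega>)))"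
    using g by (intro Bochner_Integration.integral_sum integrable_state_fun[where B = \<Gamma>]) auto
  also have "\<dots> \<le> (\<Sum>k\<in>{1..t}. \<Gamma> + (\<Sum>j\<in>J. (g j - \<Gamma>) * p j) + real (card J) * \<Gamma> * (C * r ^ k))"
    by (intro sum_mono expectation_state_fun_le[OF J g conv])
  also have "\<dots> = t * (\<Gamma> + (\<Sum>j\<in>J. (g j - \<Gamma>) * p j)) + real (card J) * \<Gamma> * C * (\<Sum>k\<in>{1..t}. r ^ k)"
    by (simp add: sum.distrib sum_distrib_left mult.assoc)
  also have "\<dots> \<le> t * (\<Gamma> + (\<Sum>j\<in>J. (g j - \<Gamma>) * p j)) + real (card J) * \<Gamma> * C * (1 / (1 - r))"
    using \<open>0 \<le> \<Gamma>\<close> \<open>0 \<le> C\<close> geometric by (intro add_left_mono mult_left_mono) auto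
  finally show ?thesis
    by simp
qed

text \<open>The n-step probabilities converge only entrywise, so the stationary mean is approached
  through finite sets of states J; off J the function g is merely bounded by \<Gamma>.\<close>

lemma limit_le_stationary_mean:
  fixes X :: "nat \<Rightarrow> 'a \<Rightarrow> real" and g p :: "'i \<Rightarrow> real"
  assumes X: "\<And>t. X t \<in> borel_measurable M"
      "\<And>t \<omega>. \<omega> \<in> space M \<Longrightarrow> \<bar>X t \<omega>\<bar> \<le> B"
      "AE \<omega> in M. (\<lambda>t. X t \<omega>) \<longlonglongrightarrow> L"
    and X_le: "\<And>t \<omega>. \<omega> \<in> space M \<Longrightarrow> 1 \<le> t \<Longrightarrow>
      X t \<omega> \<le> (\<Sum>k\<in>{1..t}. g (tau k \<omega>)) / t + R + K / t"
    and g: "\<And>j. j \<in> I \<Longrightarrow> 0 \<le> g j \<and> g j \<le> \<Gamma>"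
    and p: "(p has_sum 1) I" "\<And>j. j \<in> I \<Longrightarrow> 0 \<le> p j"
    and conv: "\<And>n i j. i \<in> I \<Longrightarrow> j \<in> I \<Longrightarrow> \<bar>nstep I P n i j - p j\<bar> \<le> C * r ^ n"
    and r: "0 \<le> r" "r < 1"
  shows "L \<le> R + (\<Sum>\<^sub>\<infinity>j\<in>I. p j * g j)"
proof (rule field_le_epsilon)
  fix e :: real
  assume "0 < e"
  obtain J where J: "finite J" "J \<subseteq> I"
    and truncation: "\<Gamma> + (\<Sum>j\<in>J. (g j - \<Gamma>) * p j) \<le> (\<Sum>\<^sub>\<infinity>j\<in>I. p j * g j) + e"
    by (rule finite_truncation_le[where p = p and g = g, OF p g \<open>0 < e\<close>])
  define a where "a = \<Gamma> + (\<Sum>j\<in>J. (g j - \<Gamma>) * p j)"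
  have "L \<le> a + R"
  proof (rule limit_le_of_expectation_le[OF X])
    fix t :: nat
    assume "1 \<le> t"
    have time_sum: "integrable M (\<lambda>\<omega>. \<Sum>k\<in>{1..t}. g (tau k \<omega>))"
      using g by (intro Bochner_Integration.integrable_sum integrable_state_fun[where B = \<Gamma>]) auto
    have "expectation (X t) \<le> expectation (\<lambda>\<omega>. (\<Sum>k\<in>{1..t}. g (tau k \<omega>)) / t + R + K / t)"
    proof (rule integral_mono)
      show "integrable M (X t)"
        using X by (intro integrable_const_bound[where B = B]) auto
      show "integrable M (\<lambda>\<omega>. (\<Sum>k\<in>{1..t}. g (tau k \<omega>)) / t + R + K / t)"
        using time_sum by simp
    qed (use X_le \<open>1 \<le> t\<close> in auto)
    also have "\<dots> = expectation (\<lambda>\<omega>. \<Sum>k\<in>{1..t}. g (tau k \<omega>)) / t + R + K / t"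
      using time_sum by (simp add: prob_space)
    also have "\<dots> \<le> (t * a + real (card J) * \<Gamma> * C / (1 - r)) / t + R + K / t"
      unfolding a_def using \<open>1 \<le> t\<close>
      by (intro add_right_mono divide_right_mono expectation_time_sum_le[OF J g conv r]) auto
    also have "\<dots> = a + R + (K + real (card J) * \<Gamma> * C / (1 - r)) / t"
      using \<open>1 \<le> t\<close> by (simp add: add_divide_distrib)
    finally show "expectation (X t) \<le> a + R + (K + real (card J) * \<Gamma> * C / (1 - r)) / t" .
  qed
  then show "L \<le> R + (\<Sum>\<^sub>\<infinity>j\<in>I. p j * g j) + e"
    using truncation unfolding a_def by linarith
qed

lemma zproc_measurable [measurable]:
  "(\<lambda>\<omega>. zproc A tau z0 t \<omega>) \<in> borel_measurable M"
proof (induction t)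
  case (Suc t)
  have tau_Suc: "tau (Suc t) \<in> measurable M (count_space I)"
    unfolding measurable_count_space_eq_countable[OF countable_states]
    using tau_in_states measurable_sets[OF tau_measurable] by auto
  have "(\<lambda>\<omega>. (\<lambda>\<eta> \<omega>. A \<eta> *v zproc A tau z0 t \<omega>) (tau (Suc t) \<omega>) \<omega>) \<in> borel_measurable M"
  proof (rule measurable_compose_countable'[OF _ tau_Suc countable_states])
    show "(\<lambda>\<omega>. A \<eta> *v zproc A tau z0 t \<omega>) \<in> borel_measurable M" for \<eta>
      by (rule measurable_compose[OF Suc]) (intro borel_measurable_continuous_onI continuous_intros)
  qed
  then show ?case
    by simp
qed simp

end

lemma standing_markov_elim:
  assumes "standing_markov M I P pst tau"
  obtains mu0 C r where "markov_chain_paths M I P tau mu0"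
    and "(pst has_sum 1) I" "\<And>j. j \<in> I \<Longrightarrow> 0 \<le> pst j"
    and "\<And>n i j. i \<in> I \<Longrightarrow> j \<in> I \<Longrightarrow> \<bar>nstep I P n i j - pst j\<bar> \<le> C * r ^ n"
    and "0 \<le> r" "r < 1"
proof -
  note markov = assms[unfolded standing_markov_def stationary_distribution_def]
  have "prob_space M" "countable I" "\<And>t. tau t \<in> measurable M (count_space UNIV)"
    "\<And>t \<omega>. \<omega> \<in> space M \<Longrightarrow> tau t \<omega> \<in> I"
    using markov by (elim conjE; simp)+
  moreover obtain mu0 where "\<And>n (is :: nat \<Rightarrow> _). (\<forall>k\<le>n. is k \<in> I) \<Longrightarrow>
      measure M {\<omega>\<in>space M. \<forall>k\<le>n. tau k \<omega> = is k} = mu0 (is 0) * (\<Prod>k<n. P (is k) (is (Suc k)))"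
    using markov by (elim conjE exE) blast
  ultimately have "markov_chain_paths M I P tau mu0"
    by (intro markov_chain_paths.intro markov_chain_paths_axioms.intro)
  moreover obtain C r where "0 \<le> r" "r < 1"
    "\<And>n i j. i \<in> I \<Longrightarrow> j \<in> I \<Longrightarrow> \<bar>nstep I P n i j - pst j\<bar> \<le> C * r ^ n"
    using markov by (elim conjE exE) blast
  moreover have "(pst has_sum 1) I" "\<And>j. j \<in> I \<Longrightarrow> 0 \<le> pst j"
    using markov by (elim conjE; simp)+
  ultimately show ?thesis
    using that by blast
qed

section \<open>Two-class Leslie matrices\<close>

lemma leslie2_mult_vec_nth [simp]:
  "(leslie2 f F s *v x) $ 1 = f * x $ 1 + F * x $ 2"
  "(leslie2 f F s *v x) $ 2 = s * x $ 1"
  by (simp_all add: leslie2_def matrix_vector_mult_def sum_2)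

lemma leslie2_nth [simp]:
  "leslie2 f F s $ 1 $ 1 = f" "leslie2 f F s $ 1 $ 2 = F"
  "leslie2 f F s $ 2 $ 1 = s" "leslie2 f F s $ 2 $ 2 = 0"
  by (simp_all add: leslie2_def)

lemma norm1_vec2: "norm1 (x :: real^2) = \<bar>x $ 1\<bar> + \<bar>x $ 2\<bar>"
  by (simp add: norm1_def sum_2)

definition leslie2_root :: "real \<Rightarrow> real \<Rightarrow> real \<Rightarrow> real" where
  "leslie2_root a b c = (a + sqrt (a\<^sup>2 + 4 * b * c)) / 2"

lemma leslie2_root_pos: "0 \<le> a \<Longrightarrow> 0 < b \<Longrightarrow> 0 < c \<Longrightarrow> 0 < leslie2_root a b c"
  unfolding leslie2_root_def by (simp add: add_nonneg_pos)

lemma leslie2_root_eq: "0 \<le> b * c \<Longrightarrow> (leslie2_root a b c)\<^sup>2 = a * leslie2_root a b c + b * c"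
  unfolding leslie2_root_def
  by (simp add: power2_eq_square field_simps add_nonneg_nonneg[of "a\<^sup>2"])

lemma spectral_radius_leslie2:
  assumes "0 \<le> a" "0 \<le> b * c"
  shows "spectral_radius (leslie2 a b c) = leslie2_root a b c"
proof -
  define r where "r = leslie2_root a b c"
  define r' where "r' = (a - sqrt (a\<^sup>2 + 4 * b * c)) / 2"
  have "r + r' = a" "r * r' = - (b * c)"
    using assms by (simp_all add: r_def r'_def leslie2_root_def field_simps power2_eq_square)
  then have sum: "complex_of_real r + of_real r' = of_real a"
    and prod: "complex_of_real r * of_real r' = - (of_real b * of_real c)"
    by (metis of_real_add, metis of_real_mult of_real_minus)
  have "(x - of_real r) * (x - of_real r') = x * x - (of_real r + of_real r') * x + of_real r * of_real r'"
    for x :: complex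
    by (simp add: algebra_simps)
  then have "det (mat x - complexify (leslie2 a b c)) = (x - of_real r) * (x - of_real r')" for x
    unfolding sum prod by (simp add: det_2 complexify_def mat_def algebra_simps)
  then have "{x. det (mat x - complexify (leslie2 a b c)) = 0} = {of_real r, of_real r'}"
    by auto
  moreover have "\<bar>r'\<bar> \<le> r"
    using assms real_le_rsqrt[of a] unfolding r_def r'_def leslie2_root_def by auto
  ultimately show ?thesis
    unfolding spectral_radius_def r_def by (simp add: max_def)
qed

lemma leslie2_entryI: "Q f \<Longrightarrow> Q F \<Longrightarrow> Q s \<Longrightarrow> Q 0 \<Longrightarrow> Q (leslie2 f F s $ i $ j)"
  using exhaust_2[of i] exhaust_2[of j] by auto

lemma has_sum_leslie2:
  assumes "(f has_sum a) I" "(F has_sum b) I" "(s has_sum c) I"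
  shows "((\<lambda>\<eta>. leslie2 (f \<eta>) (F \<eta>) (s \<eta>)) has_sum leslie2 a b c) I"
proof -
  have decompose: "leslie2 x y u = x *\<^sub>R leslie2 1 0 0 + y *\<^sub>R leslie2 0 1 0 + u *\<^sub>R leslie2 0 0 1" for x y u
    by (simp add: leslie2_def vec_eq_iff forall_2)
  have "((\<lambda>\<eta>. f \<eta> *\<^sub>R leslie2 1 0 0 + F \<eta> *\<^sub>R leslie2 0 1 0 + s \<eta> *\<^sub>R leslie2 0 0 1)
      has_sum a *\<^sub>R leslie2 1 0 0 + b *\<^sub>R leslie2 0 1 0 + c *\<^sub>R leslie2 0 0 1) I"
    by (intro has_sum_add has_sum_bounded_linear[OF bounded_linear_scaleR_left] assms)
  then show ?thesis
    by (simp only: decompose[symmetric])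
qed

lemma scaleR_leslie2: "x *\<^sub>R leslie2 f F s = leslie2 (x * f) (x * F) (x * s)"
  by (simp add: leslie2_def vec_eq_iff forall_2)

lemma infsum_scaleR_leslie2:
  fixes p :: "'i \<Rightarrow> real"
  assumes p: "(p has_sum 1) I" "\<And>j. j \<in> I \<Longrightarrow> 0 \<le> p j"
    and bounds: "\<And>\<eta>. \<eta> \<in> I \<Longrightarrow> f \<eta> \<in> {\<alpha>..\<beta>} \<and> F \<eta> \<in> {\<alpha>..\<beta>} \<and> s \<eta> \<in> {\<alpha>..\<beta>}"
    and "0 \<le> \<alpha>"
  shows "(\<Sum>\<^sub>\<infinity>\<eta>\<in>I. p \<eta> *\<^sub>R leslie2 (f \<eta>) (F \<eta>) (s \<eta>))
    = leslie2 (\<Sum>\<^sub>\<infinity>\<eta>\<in>I. p \<eta> * f \<eta>) (\<Sum>\<^sub>\<infinity>\<eta>\<in>I. p \<eta> * F \<eta>) (\<Sum>\<^sub>\<infinity>\<eta>\<in>I. p \<eta> * s \<eta>)"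
  unfolding scaleR_leslie2 using bounds \<open>0 \<le> \<alpha>\<close>
  by (intro infsumI has_sum_leslie2 weighted_infsum_bounds[OF p, where lo = \<alpha> and hi = \<beta>]) auto

locale leslie2_orbit =
  fixes z :: "nat \<Rightarrow> real^2" and f F s w :: "nat \<Rightarrow> real" and \<alpha> a b c :: real
  assumes orbit_Suc: "\<And>t. z (Suc t) = leslie2 (f (Suc t)) (F (Suc t)) (s (Suc t)) *v z t"
    and alpha_pos: "0 < \<alpha>"
    and entries_ge: "\<And>k. \<alpha> \<le> f k \<and> \<alpha> \<le> F k \<and> \<alpha> \<le> s k"
    and entries_le: "\<And>k. f k \<le> (1 + w k) * a \<and> F k \<le> (1 + w k) * b \<and> s k \<le> (1 + w k) * c"
    and w_nonneg: "\<And>k. 0 \<le> w k"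
    and start_nonneg: "\<And>i. 0 \<le> z 0 $ i"
    and start_nonzero: "z 0 \<noteq> 0"
begin

lemma entries_nonneg: "0 \<le> f k" "0 \<le> F k" "0 \<le> s k"
  using entries_ge[of k] alpha_pos by auto

lemma coefficients_pos: "0 < a" "0 < b" "0 < c"
proof -
  have "0 < y" if "\<alpha> \<le> x" "x \<le> (1 + w 0) * y" for x y
    using that alpha_pos w_nonneg[of 0] zero_less_mult_pos[of "1 + w 0" y] by linarith
  then show "0 < a" "0 < b" "0 < c"
    using entries_ge[of 0] entries_le[of 0] by blast+
qed

lemma orbit_nonneg: "0 \<le> z t $ 1 \<and> 0 \<le> z t $ 2"
  by (induction t) (simp_all add: start_nonneg orbit_Suc entries_nonneg)

lemma norm1_orbit_ge: "\<alpha> ^ t * norm1 (z 0) \<le> norm1 (z t)"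
proof (induction t)
  case (Suc t)
  have "\<alpha> * z t $ 1 \<le> f (Suc t) * z t $ 1" "\<alpha> * z t $ 2 \<le> F (Suc t) * z t $ 2"
    "0 \<le> s (Suc t) * z t $ 1"
    using entries_ge[of "Suc t"] entries_nonneg orbit_nonneg[of t] by (auto intro: mult_right_mono)
  then have "\<alpha> * norm1 (z t) \<le> norm1 (z (Suc t))"
    using orbit_nonneg[of t] orbit_nonneg[of "Suc t"] by (simp add: norm1_vec2 orbit_Suc distrib_left)
  then show ?case
    using mult_left_mono[OF Suc less_imp_le[OF alpha_pos]] by (simp add: mult.assoc)
qed simp

lemma start_pos: "0 < z 0 $ 1 \<or> 0 < z 0 $ 2"
  using start_nonzero start_nonneg[of 1] start_nonneg[of 2] by (auto simp: vec_eq_iff forall_2)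

lemma norm1_orbit_pos: "0 < norm1 (z t)"
proof -
  have "0 < norm1 (z 0)"
    using start_pos by (auto simp: norm1_vec2)
  then show ?thesis
    using norm1_orbit_ge[of t] alpha_pos by (meson less_le_trans mult_pos_pos zero_less_power)
qed

text \<open>(r, c) is a positive eigenvector of leslie2 a b c for the eigenvalue r, and z 0 \<le> m (r, c);
  each step multiplies the dominating multiple of (r, c) by at most (1 + w k) r.\<close>

lemma orbit_le_eigenvector:
  defines "r \<equiv> leslie2_root a b c" and "m \<equiv> z 0 $ 1 / leslie2_root a b c + z 0 $ 2 / c"
  shows "z t $ 1 \<le> (\<Prod>k\<in>{1..t}. 1 + w k) * r ^ t * m * r
    \<and> z t $ 2 \<le> (\<Prod>k\<in>{1..t}. 1 + w k) * r ^ t * m * c"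
proof -
  have "0 < r"
    unfolding r_def using coefficients_pos by (simp add: leslie2_root_pos)
  then have "0 \<le> m"
    using coefficients_pos start_nonneg by (simp add: m_def flip: r_def)
  show ?thesis
  proof (induction t)
    case 0
    show ?case
      using \<open>0 < r\<close> coefficients_pos start_nonneg[of 1] start_nonneg[of 2]
      by (simp add: m_def flip: r_def) (simp add: field_simps)
  next
    case (Suc t)
    define Q where "Q = (\<Prod>k\<in>{1..t}. 1 + w k) * r ^ t * m"
    have step: "(\<Prod>k\<in>{1..Suc t}. 1 + w k) * r ^ Suc t * m = (1 + w (Suc t)) * Q * r"
      unfolding Q_def by (simp add: prod.nat_ivl_Suc' algebra_simps)
    have "0 \<le> Q"
      unfolding Q_def using \<open>0 < r\<close> \<open>0 \<le> m\<close> w_nonneg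
      by (intro mult_nonneg_nonneg prod_nonneg) (auto simp: add_nonneg_nonneg)
    have IH: "z t $ 1 \<le> Q * r" "z t $ 2 \<le> Q * c"
      using Suc unfolding Q_def by auto
    have "r\<^sup>2 = a * r + b * c"
      unfolding r_def using coefficients_pos by (simp add: leslie2_root_eq)
    have "f (Suc t) * z t $ 1 + F (Suc t) * z t $ 2 \<le> (1 + w (Suc t)) * a * (Q * r) + (1 + w (Suc t)) * b * (Q * c)"
      using IH entries_le[of "Suc t"] orbit_nonneg[of t] \<open>0 \<le> Q\<close> coefficients_pos w_nonneg[of "Suc t"]
      by (intro add_mono mult_mono) auto
    also have "\<dots> = (1 + w (Suc t)) * Q * (a * r + b * c)"
      by (simp add: algebra_simps)
    also have "\<dots> = (1 + w (Suc t)) * Q * r * r"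
      using \<open>r\<^sup>2 = a * r + b * c\<close> by (simp add: power2_eq_square)
    finally have "z (Suc t) $ 1 \<le> (1 + w (Suc t)) * Q * r * r"
      by (simp add: orbit_Suc)
    moreover have "s (Suc t) * z t $ 1 \<le> (1 + w (Suc t)) * c * (Q * r)"
      using IH entries_le[of "Suc t"] orbit_nonneg[of t] \<open>0 \<le> Q\<close> coefficients_pos w_nonneg[of "Suc t"]
      by (intro mult_mono) auto
    then have "z (Suc t) $ 2 \<le> (1 + w (Suc t)) * Q * r * c"
      by (simp add: orbit_Suc algebra_simps)
    ultimately show ?case
      unfolding step by simp
  qed
qed

lemma ln_norm1_orbit_le:
  defines "r \<equiv> leslie2_root a b c" and "m \<equiv> z 0 $ 1 / leslie2_root a b c + z 0 $ 2 / c"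
  shows "ln (norm1 (z t)) \<le> (\<Sum>k\<in>{1..t}. ln (1 + w k)) + t * ln r + ln (m * (r + c))"
proof -
  have "0 < r"
    unfolding r_def using coefficients_pos by (simp add: leslie2_root_pos)
  have "0 < (\<Prod>k\<in>{1..t}. 1 + w k)"
    using w_nonneg by (intro prod_pos) (auto simp: add_pos_nonneg)
  have "(\<Prod>k\<in>{1..t}. 1 + w k) * r ^ t * (m * (r + c))
      = (\<Prod>k\<in>{1..t}. 1 + w k) * r ^ t * m * r + (\<Prod>k\<in>{1..t}. 1 + w k) * r ^ t * m * c"
    by (simp add: algebra_simps)
  then have "norm1 (z t) \<le> (\<Prod>k\<in>{1..t}. 1 + w k) * r ^ t * (m * (r + c))"
    using orbit_le_eigenvector[of t, folded m_def r_def] orbit_nonneg[of t]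
    by (simp add: norm1_vec2)
  moreover have "0 < m * (r + c)"
    using start_pos start_nonneg[of 1] start_nonneg[of 2] \<open>0 < r\<close> coefficients_pos
    by (auto simp: m_def add_pos_nonneg add_nonneg_pos simp flip: r_def)
  ultimately have "ln (norm1 (z t)) \<le> ln ((\<Prod>k\<in>{1..t}. 1 + w k) * r ^ t * (m * (r + c)))"
    using norm1_orbit_pos[of t] \<open>0 < r\<close> \<open>0 < (\<Prod>k\<in>{1..t}. 1 + w k)\<close> by simp
  also have "\<dots> = ln (\<Prod>k\<in>{1..t}. 1 + w k) + ln (r ^ t) + ln (m * (r + c))"
    using \<open>0 < m * (r + c)\<close> \<open>0 < r\<close> \<open>0 < (\<Prod>k\<in>{1..t}. 1 + w k)\<close>
    by (simp only: ln_mult_pos mult_pos_pos zero_less_power)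
  also have "ln (\<Prod>k\<in>{1..t}. 1 + w k) = (\<Sum>k\<in>{1..t}. ln (1 + w k))"
    using w_nonneg by (intro ln_prod) (auto simp: add_nonneg_eq_0_iff)
  finally show ?thesis
    using \<open>0 < r\<close> by (simp add: ln_realpow)
qed

lemma ln_norm1_orbit_ge: "t * ln \<alpha> + ln (norm1 (z 0)) \<le> ln (norm1 (z t))"
proof -
  have "ln (\<alpha> ^ t * norm1 (z 0)) \<le> ln (norm1 (z t))"
    using norm1_orbit_ge[of t] norm1_orbit_pos[of 0] norm1_orbit_pos[of t] alpha_pos by simp
  then show ?thesis
    using norm1_orbit_pos[of 0] alpha_pos by (simp add: ln_mult ln_realpow)
qed

lemma ln_norm1_orbit_div_le:
  defines "r \<equiv> leslie2_root a b c" and "m \<equiv> z 0 $ 1 / leslie2_root a b c + z 0 $ 2 / c"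
  assumes "1 \<le> t"
  shows "ln (norm1 (z t)) / t \<le> (\<Sum>k\<in>{1..t}. ln (1 + w k)) / t + ln r + ln (m * (r + c)) / t"
  using divide_right_mono[OF ln_norm1_orbit_le[of t, folded r_def m_def], of t] assms(3)
  by (simp add: add_divide_distrib)

lemma abs_ln_norm1_orbit_div_le:
  defines "r \<equiv> leslie2_root a b c" and "m \<equiv> z 0 $ 1 / leslie2_root a b c + z 0 $ 2 / c"
  assumes w_le: "\<And>k. w k \<le> W"
  shows "\<bar>ln (norm1 (z t)) / t\<bar>
    \<le> \<bar>ln \<alpha>\<bar> + \<bar>ln (norm1 (z 0))\<bar> + ln (1 + W) + \<bar>ln r\<bar> + \<bar>ln (m * (r + c))\<bar>"
proof (cases "t = 0")
  case False
  then have "1 \<le> real t"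
    by simp
  have shrink: "\<bar>x / t\<bar> \<le> \<bar>x\<bar>" for x
    using \<open>1 \<le> real t\<close> by (simp add: abs_divide divide_le_eq mult_le_cancel_left1)
  have "ln (1 + w k) \<le> ln (1 + W)" for k
    using w_nonneg[of k] w_le[of k] by simp
  then have "(\<Sum>k\<in>{1..t}. ln (1 + w k)) / t \<le> ln (1 + W)"
    using sum_mono[of "{1..t}" "\<lambda>k. ln (1 + w k)" "\<lambda>_. ln (1 + W)"] \<open>1 \<le> real t\<close>
    by (simp add: divide_le_eq mult.commute)
  moreover have "ln (norm1 (z t)) / t \<le> (\<Sum>k\<in>{1..t}. ln (1 + w k)) / t + ln r + ln (m * (r + c)) / t"
    using ln_norm1_orbit_div_le[of t, folded r_def m_def] False by simp
  moreover have "ln \<alpha> + ln (norm1 (z 0)) / t \<le> ln (norm1 (z t)) / t"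
    using divide_right_mono[OF ln_norm1_orbit_ge[of t], of t] \<open>1 \<le> real t\<close>
    by (simp add: add_divide_distrib)
  moreover have "0 \<le> ln (1 + W)"
    using w_nonneg[of 0] w_le[of 0] by simp
  ultimately show ?thesis
    using shrink[of "ln (norm1 (z 0))"] shrink[of "ln (m * (r + c))"]
      abs_ge_self[of "ln r"] abs_ge_minus_self[of "ln \<alpha>"]
    unfolding abs_le_iff by linarith
qed (use w_nonneg[of 0] w_le[of 0] in simp)

end

section \<open>Relative perturbations of the mean matrix\<close>

lemma Wpert_le_WM: "Wpert A B i j \<le> WM A B"
  unfolding WM_def by (rule Max_ge) auto

lemma WM_leI: "(\<And>i j. Wpert A B i j \<le> K) \<Longrightarrow> WM A B \<le> K"
  unfolding WM_def by (subst Max_le_iff) auto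

lemma WM_nonneg: "B $ i $ j = 0 \<Longrightarrow> 0 \<le> WM A B"
  using Wpert_le_WM[of A B i j] by (simp add: Wpert_def)

lemma entry_le_WM: "0 < B $ i $ j \<Longrightarrow> A $ i $ j \<le> (1 + WM A B) * B $ i $ j"
  using Wpert_le_WM[of A B i j] by (simp add: Wpert_def field_simps)

lemma WM_le_ratio:
  assumes "\<And>i j. A $ i $ j \<le> \<beta>" "\<And>i j. B $ i $ j \<noteq> 0 \<Longrightarrow> \<alpha> \<le> B $ i $ j"
    and "0 < \<alpha>" "\<alpha> \<le> \<beta>"
  shows "WM A B \<le> \<beta> / \<alpha> - 1"
proof (rule WM_leI)
  fix i j
  show "Wpert A B i j \<le> \<beta> / \<alpha> - 1"
  proof (cases "B $ i $ j = 0")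
    case False
    then have "A $ i $ j / B $ i $ j \<le> \<beta> / \<alpha>"
      using assms by (intro frac_le) (auto intro: order.trans[OF _ assms(1)])
    then show ?thesis
      using False assms(2)[OF False] assms(3) by (simp add: Wpert_def diff_divide_distrib)
  qed (use assms in \<open>simp add: Wpert_def\<close>)
qed

lemma WM_leslie2:
  assumes "0 < \<alpha>" "\<alpha> \<le> \<beta>" "\<alpha> \<le> a" "\<alpha> \<le> b" "\<alpha> \<le> c" "f \<le> \<beta>" "F \<le> \<beta>" "s \<le> \<beta>"
  defines "W \<equiv> WM (leslie2 f F s) (leslie2 a b c)"
  shows "0 \<le> W" "W \<le> \<beta> / \<alpha> - 1" "f \<le> (1 + W) * a" "F \<le> (1 + W) * b" "s \<le> (1 + W) * c"
proof -
  show "0 \<le> W"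
    unfolding W_def by (rule WM_nonneg[of _ 2 2]) simp
  show "W \<le> \<beta> / \<alpha> - 1"
    unfolding W_def
  proof (rule WM_le_ratio)
    show "leslie2 f F s $ i $ j \<le> \<beta>" for i j
      using assms by (intro leslie2_entryI[where Q = "\<lambda>x. x \<le> \<beta>"]) auto
    have "leslie2 a b c $ i $ j \<noteq> 0 \<longrightarrow> \<alpha> \<le> leslie2 a b c $ i $ j" for i j
      using assms by (intro leslie2_entryI[where Q = "\<lambda>x. x \<noteq> 0 \<longrightarrow> \<alpha> \<le> x"]) auto
    then show "\<alpha> \<le> leslie2 a b c $ i $ j" if "leslie2 a b c $ i $ j \<noteq> 0" for i j
      using that by blast
  qed (use assms in auto)
  show "f \<le> (1 + W) * a" "F \<le> (1 + W) * b" "s \<le> (1 + W) * c"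
    using entry_le_WM[of "leslie2 a b c" 1 1 "leslie2 f F s"] entry_le_WM[of "leslie2 a b c" 1 2 "leslie2 f F s"]
      entry_le_WM[of "leslie2 a b c" 2 1 "leslie2 f F s"] assms
    unfolding W_def by simp_all
qed

lemma (in markov_chain_paths) leslie2_growth_le:
  fixes f F s w p :: "'i \<Rightarrow> real" and z0 :: "real^2"
  assumes "0 < \<alpha>"
    and entries_ge: "\<And>\<eta>. \<eta> \<in> I \<Longrightarrow> \<alpha> \<le> f \<eta> \<and> \<alpha> \<le> F \<eta> \<and> \<alpha> \<le> s \<eta>"
    and entries_le: "\<And>\<eta>. \<eta> \<in> I \<Longrightarrow> f \<eta> \<le> (1 + w \<eta>) * a \<and> F \<eta> \<le> (1 + w \<eta>) * b \<and> s \<eta> \<le> (1 + w \<eta>) * c"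
    and w: "\<And>\<eta>. \<eta> \<in> I \<Longrightarrow> 0 \<le> w \<eta> \<and> w \<eta> \<le> W"
    and z0: "\<And>i. 0 \<le> z0 $ i" "z0 \<noteq> 0"
    and lim: "AE \<omega> in M. (\<lambda>t. ln (norm1 (zproc (\<lambda>\<eta>. leslie2 (f \<eta>) (F \<eta>) (s \<eta>)) tau z0 t \<omega>)) / t)
      \<longlonglongrightarrow> L"
    and p: "(p has_sum 1) I" "\<And>j. j \<in> I \<Longrightarrow> 0 \<le> p j"
    and conv: "\<And>n i j. i \<in> I \<Longrightarrow> j \<in> I \<Longrightarrow> \<bar>nstep I P n i j - p j\<bar> \<le> C * r ^ n"
    and r: "0 \<le> r" "r < 1"
  shows "L \<le> ln (leslie2_root a b c) + (\<Sum>\<^sub>\<infinity>\<eta>\<in>I. p \<eta> * ln (1 + w \<eta>))"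
proof -
  define A where "A \<eta> = leslie2 (f \<eta>) (F \<eta>) (s \<eta>)" for \<eta>
  define m where "m = z0 $ 1 / leslie2_root a b c + z0 $ 2 / c"
  have orbit: "leslie2_orbit (\<lambda>t. zproc A tau z0 t \<omega>) (\<lambda>k. f (tau k \<omega>)) (\<lambda>k. F (tau k \<omega>))
      (\<lambda>k. s (tau k \<omega>)) (\<lambda>k. w (tau k \<omega>)) \<alpha> a b c" if "\<omega> \<in> space M" for \<omega>
    using \<open>0 < \<alpha>\<close> entries_ge entries_le w z0 tau_in_states[OF that]
    by unfold_locales (simp_all add: A_def)
  show ?thesis
  proof (rule limit_le_stationary_mean[OF _ _ lim[folded A_def] _ _ p conv r])
    show "\<bar>ln (norm1 (zproc A tau z0 t \<omega>)) / t\<bar>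
      \<le> \<bar>ln \<alpha>\<bar> + \<bar>ln (norm1 z0)\<bar> + ln (1 + W) + \<bar>ln (leslie2_root a b c)\<bar>
        + \<bar>ln (m * (leslie2_root a b c + c))\<bar>" if "\<omega> \<in> space M" for t \<omega>
      using leslie2_orbit.abs_ln_norm1_orbit_div_le[OF orbit[OF that], of W t] w tau_in_states[OF that]
      by (simp add: m_def)
    show "ln (norm1 (zproc A tau z0 t \<omega>)) / t
      \<le> (\<Sum>k\<in>{1..t}. ln (1 + w (tau k \<omega>))) / t + ln (leslie2_root a b c)
        + ln (m * (leslie2_root a b c + c)) / t" if "\<omega> \<in> space M" "1 \<le> t" for t \<omega>
      using leslie2_orbit.ln_norm1_orbit_div_le[OF orbit[OF that(1)] that(2)] by (simp add: m_def)
    show "0 \<le> ln (1 + w \<eta>) \<and> ln (1 + w \<eta>) \<le> ln (1 + W)" if "\<eta> \<in> I" for \<eta>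
      using w[OF that] by simp
  qed measurable
qed

theorem mainTheorem3:
  fixes M :: "'a measure" and I :: "'i set" and P :: "'i \<Rightarrow> 'i \<Rightarrow> real"
    and pst :: "'i \<Rightarrow> real" and tau :: "nat \<Rightarrow> 'a \<Rightarrow> 'i"
    and f F s :: "'i \<Rightarrow> real" and \<alpha> \<beta> :: real
    and z0 :: "real^2" and logLS :: real
    and Abar :: "real^2^2" and C_II :: real
  assumes markov: "standing_markov M I P pst tau"
    and ab: "0 < \<alpha>" "\<alpha> \<le> \<beta>"
    and bounds: "\<And>\<eta>. \<eta> \<in> I \<Longrightarrow> f \<eta> \<in> {\<alpha>..\<beta>} \<and> F \<eta> \<in> {\<alpha>..\<beta>} \<and> s \<eta> \<in> {\<alpha>..\<beta>}"
    and z0_nonneg: "\<And>i. z0 $ i \<ge> 0" and z0_nz: "z0 \<noteq> 0"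
    and SGR: "AE \<omega> in M.
      (\<lambda>t. ln (norm1 (zproc (\<lambda>\<eta>. leslie2 (f \<eta>) (F \<eta>) (s \<eta>)) tau z0 t \<omega>)) / real t)
        \<longlonglongrightarrow> logLS"
    and Abar_def: "Abar = (\<Sum>\<^sub>\<infinity>\<eta>\<in>I. pst \<eta> *\<^sub>R leslie2 (f \<eta>) (F \<eta>) (s \<eta>))"
    and C_II_def: "C_II = ln (spectral_radius Abar)
                 + (\<Sum>\<^sub>\<infinity>\<eta>\<in>I. pst \<eta> * ln (1 + WM (leslie2 (f \<eta>) (F \<eta>) (s \<eta>)) Abar))"
  shows "logLS \<le> C_II \<and> C_II \<ge> ln (spectral_radius Abar)"
proof -
  obtain mu0 C r where chain: "markov_chain_paths M I P tau mu0"
    and pst: "(pst has_sum 1) I" "\<And>j. j \<in> I \<Longrightarrow> 0 \<le> pst j"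
    and conv: "\<And>n i j. i \<in> I \<Longrightarrow> j \<in> I \<Longrightarrow> \<bar>nstep I P n i j - pst j\<bar> \<le> C * r ^ n"
    and r: "0 \<le> r" "r < 1"
    using standing_markov_elim[OF markov] by blast
  define a b c where "a = (\<Sum>\<^sub>\<infinity>\<eta>\<in>I. pst \<eta> * f \<eta>)" and "b = (\<Sum>\<^sub>\<infinity>\<eta>\<in>I. pst \<eta> * F \<eta>)"
    and "c = (\<Sum>\<^sub>\<infinity>\<eta>\<in>I. pst \<eta> * s \<eta>)"
  have abc: "\<alpha> \<le> a" "\<alpha> \<le> b" "\<alpha> \<le> c"
    unfolding a_def b_def c_def using bounds ab
    by (auto intro!: weighted_infsum_bounds[OF pst, where lo = \<alpha> and hi = \<beta>])
  have Abar: "Abar = leslie2 a b c"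
    unfolding Abar_def a_def b_def c_def using pst bounds ab by (intro infsum_scaleR_leslie2) auto
  define w where "w \<eta> = WM (leslie2 (f \<eta>) (F \<eta>) (s \<eta>)) Abar" for \<eta>
  have W: "0 \<le> w \<eta>" "w \<eta> \<le> \<beta> / \<alpha> - 1"
    "f \<eta> \<le> (1 + w \<eta>) * a" "F \<eta> \<le> (1 + w \<eta>) * b" "s \<eta> \<le> (1 + w \<eta>) * c" if "\<eta> \<in> I" for \<eta>
    unfolding w_def Abar using WM_leslie2[OF ab abc] bounds[OF that] by auto
  have "logLS \<le> ln (leslie2_root a b c) + (\<Sum>\<^sub>\<infinity>\<eta>\<in>I. pst \<eta> * ln (1 + w \<eta>))"
    using bounds W
    by (intro markov_chain_paths.leslie2_growth_le[OF chain ab(1) _ _ _ z0_nonneg z0_nz SGR pst conv r]) auto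
  moreover have "0 \<le> (\<Sum>\<^sub>\<infinity>\<eta>\<in>I. pst \<eta> * ln (1 + w \<eta>))"
    using pst bounds W by (intro infsum_nonneg) simp
  moreover have "spectral_radius Abar = leslie2_root a b c"
    unfolding Abar using abc ab by (intro spectral_radius_leslie2) auto
  ultimately show ?thesis
    unfolding C_II_def w_def by simp
qed

end
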